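(* Fix an integer $M\ge 6$ and a time $t>M$ of an insertion-only edge stream, so $|E^{(t)}|=t$. Let $\mathcal{S}_{\mathrm{mix}}$ be the sample of $M$ edges from $E^{(t)}$ obtained by reservoir sampling with capacity $M$ (as described in the context), and let $\mathcal{S}_{\mathrm{in}}$ be obtained by including each edge of $E^{(t)}$ independently with probability $M/t$. Let $f:2^{E^{(t)}}\to\{0,1\}$ be an arbitrary function. Then \[ \Pr\left(f(\mathcal{S}_{\mathrm{mix}})=1\right)\le e\sqrt{M}\,\Pr\left(f(\mathcal{S}_{\mathrm{in}})=1\right). \]
   Context: An insertion-only edge stream: at each time step $s=1,2,\dots$ an edge $e_s$ between two distinct vertices arrives, which is not already present; $E^{(t)}=\{e_1,\dots,e_t\}$. Reservoir sampling with capacity $M$: the sample starts empty; at time $s$, if $s\le M$ the edge $e_s$ is inserted; if $s>M$, with probability $M/s$ an edge chosen uniformly at random from the sample is removed and $e_s$ is inserted, otherwise the sample is unchanged. $\mathcal{S}_{\mathrm{mix}}$ is the sample at the end of time step $t$. *)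

theory Defs
  imports "HOL-Probability.Probability"
begin

definition reservoir_step :: "nat \<Rightarrow> nat \<Rightarrow> 'e \<Rightarrow> 'e set \<Rightarrow> 'e set pmf" where
  "reservoir_step M s e S =
     (if s \<le> M then return_pmf (insert e S)
      else do {
        b \<leftarrow> bernoulli_pmf (real M / real s);
        if b then map_pmf (\<lambda>x. insert e (S - {x})) (pmf_of_set S)
        else return_pmf S
      })"

text \<open>Reservoir sampling run on a stream given in reverse order (most recent edge first).\<close>
fun reservoir_rev :: "nat \<Rightarrow> 'e list \<Rightarrow> 'e set pmf" where
  "reservoir_rev M [] = return_pmf {}"
| "reservoir_rev M (e # rs) =
     bind_pmf (reservoir_rev M rs) (reservoir_step M (length rs + 1) e)"

definition reservoir :: "nat \<Rightarrow> 'e list \<Rightarrow> 'e set pmf" where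
  "reservoir M es = reservoir_rev M (rev es)"

definition indep_sample :: "real \<Rightarrow> 'e set \<Rightarrow> 'e set pmf" where
  "indep_sample p E = map_pmf (\<lambda>g. {e \<in> E. g e}) (Pi_pmf E False (\<lambda>_. bernoulli_pmf p))"

end

theory Submission
  imports Defs
begin

text \<open>Once the stream is longer than \<open>M\<close>, the reservoir is a uniformly random \<open>M\<close>-subset of
  the elements seen so far (each step maps the uniform distribution on \<open>M\<close>-subsets of \<open>R\<close> to the
  uniform one on \<open>M\<close>-subsets of \<open>R \<union> {e}\<close>), whereas independent sampling at rate \<open>p = M/t\<close>
  hits each fixed \<open>M\<close>-subset with probability \<open>p^M (1 - p)^(t - M)\<close>. So the two probabilities
  of \<open>f = 1\<close> differ at most by the reciprocal of the binomial probability
  \<open>C(t, M) p^M (1 - p)^(t - M)\<close> at the mean. With \<open>h n = n! e^n / n^n\<close> this reciprocal is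
  \<open>h M h (t - M) / h t\<close>; \<open>h\<close> is increasing and, by \<open>ln (1 + x) \<ge> 2x / (2 + x)\<close>,
  \<open>h n^2 \<le> e^2 n\<close>, which bounds it by \<open>e \<surd>M\<close>.\<close>

subsection \<open>A Stirling-type estimate for the binomial probability at its mean\<close>

lemma ln_one_plus_ge:
  fixes x :: real
  assumes "0 \<le> x"
  shows "2 * x / (2 + x) \<le> ln (1 + x)"
proof -
  let ?f = "\<lambda>y::real. ln (1 + y) - 2 * y / (2 + y)"
  have "?f 0 \<le> ?f x"
  proof (rule DERIV_nonneg_imp_nondecreasing[OF assms])
    fix y :: real
    assume y: "0 \<le> y" "y \<le> x"
    have "DERIV ?f y :> (1 / (1 + y) - (2 * (2 + y) - 2 * y) / (2 + y)^2)"
      using y by (auto intro!: derivative_eq_intros simp: power2_eq_square)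
    moreover have "1 / (1 + y) - (2 * (2 + y) - 2 * y) / (2 + y)^2 = y^2 / ((1 + y) * (2 + y)^2)"
      using y by (simp add: divide_simps power2_eq_square) (simp add: algebra_simps)
    moreover have "0 \<le> y^2 / ((1 + y) * (2 + y)^2)"
      using y by simp
    ultimately show "\<exists>d. DERIV ?f y :> d \<and> 0 \<le> d"
      by metis
  qed
  thus ?thesis by simp
qed

lemma exp_two_le_one_plus_inverse_power:
  assumes "n \<ge> 1"
  shows "exp 2 \<le> (1 + 1 / real n) ^ (2 * n + 1)"
proof -
  have "2 / (2 * real n + 1) \<le> ln (1 + 1 / real n)"
    using ln_one_plus_ge[of "1 / real n"] assms by (simp add: field_simps)
  hence "2 \<le> real (2 * n + 1) * ln (1 + 1 / real n)"
    using assms by (simp add: field_simps)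
  hence "exp 2 \<le> exp (real (2 * n + 1) * ln (1 + 1 / real n))"
    by simp
  also have "\<dots> = (1 + 1 / real n) ^ (2 * n + 1)"
    by (subst exp_of_nat_mult) (simp add: add_pos_nonneg)
  finally show ?thesis .
qed

definition stirling_ratio :: "nat \<Rightarrow> real" where
  "stirling_ratio n = fact n * exp (real n) / real n ^ n"

lemma stirling_ratio_pos: "stirling_ratio n > 0"
  by (cases n) (auto simp: stirling_ratio_def)

lemma stirling_ratio_Suc:
  "stirling_ratio (Suc n) = fact n * exp (real n) * exp 1 / (real n + 1) ^ n"
proof -
  have "stirling_ratio (Suc n)
        = ((real n + 1) * fact n) * (exp (real n) * exp 1) / ((real n + 1) * (real n + 1) ^ n)"
    unfolding stirling_ratio_def by (simp add: exp_add[symmetric] add.commute)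
  thus ?thesis
    by (simp add: mult.assoc)
qed

lemma incseq_stirling_ratio: "incseq stirling_ratio"
proof (rule incseq_SucI)
  fix n
  show "stirling_ratio n \<le> stirling_ratio (Suc n)"
  proof (cases "n = 0")
    case True
    thus ?thesis by (simp add: stirling_ratio_def)
  next
    case False
    have "(1 + 1 / real n) ^ n \<le> exp 1"
      by (rule exp_ge_one_plus_x_over_n_power_n) (use False in auto)
    hence "(real n + 1) ^ n \<le> exp 1 * real n ^ n"
      using False by (simp add: power_divide field_simps)
    hence "fact n * exp (real n) / real n ^ n \<le> fact n * exp (real n) * exp 1 / (real n + 1) ^ n"
      using False by (simp add: field_simps)
    thus ?thesis
      by (subst stirling_ratio_Suc) (simp add: stirling_ratio_def)
  qed
qed

lemma stirling_ratio_square_le: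
  assumes "n \<ge> 1"
  shows "(stirling_ratio n)^2 \<le> exp 2 * real n"
  using assms
proof (induction n rule: dec_induct)
  case base
  thus ?case by (simp add: stirling_ratio_def power2_eq_square exp_add[symmetric])
next
  case (step n)
  define a where "a = fact n * exp (real n)"
  have "a^2 \<le> exp 2 * real n ^ (2 * n + 1)"
    using step.IH step.hyps(1)
    by (simp add: stirling_ratio_def a_def power_divide field_simps power_mult power2_eq_square)
  also have "\<dots> \<le> (real n + 1) ^ (2 * n + 1)"
    using exp_two_le_one_plus_inverse_power[OF step.hyps(1)] step.hyps(1)
    by (simp add: power_divide field_simps)
  finally have "a^2 * exp 2 / (real n + 1)^(2 * n) \<le> (real n + 1) ^ (2 * n + 1) * exp 2 / (real n + 1)^(2 * n)"
    by (intro divide_right_mono mult_right_mono) auto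
  moreover have "(stirling_ratio (Suc n))^2 = a^2 * exp 2 / (real n + 1)^(2 * n)"
    by (simp add: stirling_ratio_Suc a_def power_divide power_mult_distrib power_mult
        exp_add[symmetric] power2_eq_square mult_ac)
  ultimately show ?case
    by (simp add: power_add mult.commute add.commute)
qed

lemma binomial_at_mean_eq_stirling_ratio:
  assumes "1 \<le> M" "M < t"
  shows "real (t choose M) * (real M / real t) ^ M * (1 - real M / real t) ^ (t - M)
         = stirling_ratio t / (stirling_ratio M * stirling_ratio (t - M))"
proof -
  define k where "k = t - M"
  have t: "t = M + k" "real t > 0" and k: "k \<ge> 1"
    using assms by (auto simp: k_def)
  have "1 - real M / real t = real k / real t"
    using t by (simp add: field_simps)
  moreover have "real (t choose M) = fact t / (fact M * fact k)"
    using binomial_fact[of M t] assms k_def by simp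
  moreover have "exp (real t) = exp (real M) * exp (real k)"
    by (simp add: t exp_add[symmetric])
  moreover have "(real M + real k) ^ t = (real M + real k) ^ M * (real M + real k) ^ k"
    by (simp add: t power_add)
  ultimately show ?thesis
    using t k assms(1) unfolding stirling_ratio_def k_def[symmetric]
    by (simp add: power_divide field_simps)
qed

lemma binomial_at_mean_ge:
  assumes "1 \<le> M" "M < t"
  shows "1 \<le> exp 1 * sqrt (real M)
              * (real (t choose M) * (real M / real t) ^ M * (1 - real M / real t) ^ (t - M))"
proof -
  have "(stirling_ratio M)^2 \<le> (exp 1 * sqrt (real M))^2"
    using stirling_ratio_square_le[OF assms(1)]
    by (simp add: power_mult_distrib power2_eq_square[of "exp 1"] exp_add[symmetric])
  hence "stirling_ratio M \<le> exp 1 * sqrt (real M)"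
    by (rule power2_le_imp_le) simp
  moreover have "stirling_ratio (t - M) \<le> stirling_ratio t"
    using incseq_stirling_ratio by (rule incseqD) simp
  ultimately have "stirling_ratio M * stirling_ratio (t - M) \<le> exp 1 * sqrt (real M) * stirling_ratio t"
    by (intro mult_mono) (auto intro: less_imp_le stirling_ratio_pos)
  thus ?thesis
    unfolding binomial_at_mean_eq_stirling_ratio[OF assms]
    using stirling_ratio_pos[of M] stirling_ratio_pos[of "t - M"] by (simp add: field_simps)
qed

subsection \<open>Reservoir sampling yields a uniform subset\<close>

definition subsets_of_card :: "'a set \<Rightarrow> nat \<Rightarrow> 'a set set" where
  "subsets_of_card R k = {S. S \<subseteq> R \<and> card S = k}"

lemma finite_subsets_of_card: "finite R \<Longrightarrow> finite (subsets_of_card R k)"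
  unfolding subsets_of_card_def by (rule finite_subset[of _ "Pow R"]) auto

lemma card_subsets_of_card: "finite R \<Longrightarrow> card (subsets_of_card R k) = card R choose k"
  unfolding subsets_of_card_def by (rule n_subsets)

lemma subsets_of_card_nonempty: "finite R \<Longrightarrow> k \<le> card R \<Longrightarrow> subsets_of_card R k \<noteq> {}"
  using card_subsets_of_card[of R k] by fastforce

lemma subsets_of_card_card: "finite R \<Longrightarrow> subsets_of_card R (card R) = {R}"
  unfolding subsets_of_card_def using card_subset_eq by blast

lemma mem_subsets_of_card_insert_iff:
  "e \<notin> R \<Longrightarrow> T \<in> subsets_of_card R k \<longleftrightarrow> T \<in> subsets_of_card (insert e R) k \<and> e \<notin> T"
  unfolding subsets_of_card_def by auto

lemma pmf_reservoir_step_full: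
  assumes "finite S" "card S = M" "1 \<le> M" "M < s"
  shows "pmf (reservoir_step M s e S) T =
           real M / real s * (real (card {x\<in>S. insert e (S - {x}) = T}) / real M)
           + (1 - real M / real s) * (if S = T then 1 else 0)"
proof -
  have "S \<noteq> {}" "0 \<le> real M / real s" "real M / real s \<le> 1"
    using assms by auto
  moreover have "measure_pmf.prob (pmf_of_set S) ((\<lambda>x. insert e (S - {x})) -` {T})
                 = real (card {x\<in>S. insert e (S - {x}) = T}) / real M"
    using assms \<open>S \<noteq> {}\<close>
    by (subst measure_pmf_of_set) (auto intro!: arg_cong[where f=card] simp: Int_def)
  ultimately show ?thesis
    using assms unfolding reservoir_step_def by (simp add: pmf_bind pmf_map indicator_def)
qed

text \<open>A pair \<open>(S, x)\<close> whose replacement step produces \<open>T\<close> is determined by the evicted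
  element \<open>x\<close>, because \<open>S = insert x (T - {e})\<close>.\<close>

lemma replacement_pairs_eq:
  assumes "finite R" "e \<notin> R" "1 \<le> M"
  shows "(SIGMA S:subsets_of_card R M. {x\<in>S. insert e (S - {x}) = T})
         = (if T \<in> subsets_of_card (insert e R) M \<and> e \<in> T
            then (\<lambda>x. (insert x (T - {e}), x)) ` (R - (T - {e})) else {})"
    (is "?Pairs = _")
proof (cases "T \<in> subsets_of_card (insert e R) M \<and> e \<in> T")
  case True
  hence T: "T \<subseteq> insert e R" "card T = M" "e \<in> T" "finite T"
    using assms(1) finite_subset unfolding subsets_of_card_def by auto
  have "?Pairs = (\<lambda>x. (insert x (T - {e}), x)) ` (R - (T - {e}))"
  proof (intro equalityI subsetI)
    fix p
    assume "p \<in> ?Pairs"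
    then obtain S x where p: "p = (S, x)" "S \<subseteq> R" "x \<in> S" "insert e (S - {x}) = T"
      unfolding subsets_of_card_def by auto
    hence "S - {x} = T - {e}"
      using assms(2) by auto
    thus "p \<in> (\<lambda>x. (insert x (T - {e}), x)) ` (R - (T - {e}))"
      using p by auto
  next
    fix p
    assume "p \<in> (\<lambda>x. (insert x (T - {e}), x)) ` (R - (T - {e}))"
    then obtain x where p: "p = (insert x (T - {e}), x)" "x \<in> R" "x \<notin> T - {e}"
      by auto
    moreover have "x \<noteq> e"
      using p assms(2) by auto
    ultimately show "p \<in> ?Pairs"
      using T assms(3) unfolding subsets_of_card_def by auto
  qed
  thus ?thesis using True by simp
next
  case False
  have "?Pairs = {}"
  proof (rule ccontr)
    assume "?Pairs \<noteq> {}"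
    then obtain S x where p: "S \<subseteq> R" "card S = M" "x \<in> S" "insert e (S - {x}) = T"
      unfolding subsets_of_card_def by auto
    moreover have "e \<notin> S" "finite S"
      using p assms finite_subset by auto
    ultimately have "T \<in> subsets_of_card (insert e R) M \<and> e \<in> T"
      using assms(3) unfolding subsets_of_card_def by auto
    thus False using False by blast
  qed
  thus ?thesis
    by (subst if_not_P[OF False])
qed

lemma sum_card_replacements:
  assumes "finite R" "e \<notin> R" "1 \<le> M"
  shows "(\<Sum>S\<in>subsets_of_card R M. real (card {x\<in>S. insert e (S - {x}) = T}))
         = (if T \<in> subsets_of_card (insert e R) M \<and> e \<in> T then real (card R + 1 - M) else 0)"
proof -
  have "(\<Sum>S\<in>subsets_of_card R M. real (card {x\<in>S. insert e (S - {x}) = T}))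
        = real (card (SIGMA S:subsets_of_card R M. {x\<in>S. insert e (S - {x}) = T}))"
    using finite_subsets_of_card[OF assms(1)]
    by (subst card_SigmaI) (auto simp: subsets_of_card_def dest: finite_subset[OF _ assms(1)])
  also have "\<dots> = (if T \<in> subsets_of_card (insert e R) M \<and> e \<in> T then real (card R + 1 - M) else 0)"
  proof -
    have "inj_on (\<lambda>x. (insert x (T - {e}), x)) (R - (T - {e}))"
      by (rule inj_onI) auto
    moreover have "card (R - (T - {e})) = card R + 1 - M"
      if "T \<in> subsets_of_card (insert e R) M" "e \<in> T"
    proof -
      have "T - {e} \<subseteq> R" "finite T" "card T = M"
        using that assms finite_subset[of T "insert e R"] unfolding subsets_of_card_def by auto
      thus ?thesis
        using that assms card_mono[OF assms(1) \<open>T - {e} \<subseteq> R\<close>] by (simp add: card_Diff_subset)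
    qed
    ultimately show ?thesis
      by (simp add: replacement_pairs_eq[OF assms] card_image)
  qed
  finally show ?thesis .
qed

lemma reservoir_step_uniform:
  assumes fin: "finite R" and eR: "e \<notin> R" and M: "1 \<le> M" "M \<le> card R"
  shows "bind_pmf (pmf_of_set (subsets_of_card R M)) (reservoir_step M (card R + 1) e)
         = pmf_of_set (subsets_of_card (insert e R) M)"
proof (rule pmf_eqI)
  fix T
  define n where "n = card R"
  define p where "p = real M / real (n + 1)"
  define U where "U = subsets_of_card R M"
  define U' where "U' = subsets_of_card (insert e R) M"
  have U: "finite U" "U \<noteq> {}" "card U = n choose M"
    using finite_subsets_of_card subsets_of_card_nonempty card_subsets_of_card fin M
    unfolding U_def n_def by auto
  have U': "finite U'" "U' \<noteq> {}" "card U' = (n + 1) choose M"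
    using finite_subsets_of_card[of "insert e R" M] subsets_of_card_nonempty[of "insert e R" M]
      card_subsets_of_card[of "insert e R" M] fin eR M
    unfolding U'_def n_def by auto
  have N: "real (n choose M) > 0" "real ((n + 1) choose M) > 0"
    using M n_def by simp_all
  have "(\<Sum>S\<in>U. pmf (reservoir_step M (n + 1) e S) T)
        = (\<Sum>S\<in>U. p / real M * real (card {x\<in>S. insert e (S - {x}) = T})
                   + (1 - p) * (if S = T then 1 else 0))"
  proof (rule sum.cong[OF refl])
    fix S
    assume "S \<in> U"
    hence "finite S" "card S = M"
      using fin finite_subset unfolding U_def subsets_of_card_def by auto
    thus "pmf (reservoir_step M (n + 1) e S) T
          = p / real M * real (card {x\<in>S. insert e (S - {x}) = T}) + (1 - p) * (if S = T then 1 else 0)"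
      using pmf_reservoir_step_full[of S M "n + 1" e T] M unfolding p_def n_def by simp
  qed
  also have "\<dots> = p / real M * (\<Sum>S\<in>U. real (card {x\<in>S. insert e (S - {x}) = T}))
                  + (1 - p) * (if T \<in> U then 1 else 0)"
    using U(1) by (simp add: sum.distrib sum_distrib_left[symmetric] sum_divide_distrib[symmetric])
  also have "\<dots> = p / real M * (if T \<in> U' \<and> e \<in> T then real (n + 1 - M) else 0)
                  + (1 - p) * (if T \<in> U' \<and> e \<notin> T then 1 else 0)"
    unfolding U_def U'_def n_def sum_card_replacements[OF fin eR M(1)]
    using mem_subsets_of_card_insert_iff[OF eR, of T M] by simp
  also have "\<dots> = (if T \<in> U' then real (n choose M) / real ((n + 1) choose M) else 0)"
  proof -
    have "real (n + 1 - M) * real ((n + 1) choose M) = real (n + 1) * real (n choose M)"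
      using binomial_absorb_comp[of "n + 1" M] by (metis diff_add_inverse2 of_nat_mult)
    hence "real (n + 1 - M) / real (n + 1) = real (n choose M) / real ((n + 1) choose M)"
      using N by (simp add: field_simps)
    moreover have "1 - p = real (n + 1 - M) / real (n + 1)"
      using M unfolding p_def n_def by (simp add: field_simps of_nat_diff)
    moreover have "p / real M = 1 / real (n + 1)"
      using M unfolding p_def by simp
    ultimately show ?thesis
      by (cases "e \<in> T") simp_all
  qed
  finally have "(\<Sum>S\<in>U. pmf (reservoir_step M (n + 1) e S) T) / real (card U)
                = (if T \<in> U' then 1 / real (card U') else 0)"
    using N U(3) U'(3) by simp
  thus "pmf (bind_pmf (pmf_of_set U) (reservoir_step M (card R + 1) e)) T = pmf (pmf_of_set U') T"
    using U U' unfolding n_def by (simp add: pmf_bind_pmf_of_set)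
qed

lemma reservoir_rev_uniform:
  assumes "distinct rs" "1 \<le> M"
  shows "reservoir_rev M rs = pmf_of_set (subsets_of_card (set rs) (min M (length rs)))"
  using assms(1)
proof (induction rs)
  case Nil
  thus ?case
    using subsets_of_card_card[of "{} :: 'a set"] by (simp add: pmf_of_set_singleton)
next
  case (Cons e rs)
  have e: "e \<notin> set rs" and card_rs: "card (set rs) = length rs"
    using Cons.prems distinct_card by auto
  have IH: "reservoir_rev M rs = pmf_of_set (subsets_of_card (set rs) (min M (length rs)))"
    using Cons by simp
  show ?case
  proof (cases "length rs < M")
    case True
    thus ?thesis
      using IH card_rs e subsets_of_card_card[of "set rs"] subsets_of_card_card[of "insert e (set rs)"]
      by (simp add: reservoir_step_def pmf_of_set_singleton bind_return_pmf del: insert_Diff_single)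
  next
    case False
    thus ?thesis
      using IH card_rs e reservoir_step_uniform[of "set rs" e M] assms(2) by simp
  qed
qed

lemma reservoir_uniform:
  assumes "distinct es" "1 \<le> M" "M \<le> length es"
  shows "reservoir M es = pmf_of_set (subsets_of_card (set es) M)"
  using reservoir_rev_uniform[of "rev es" M] assms unfolding reservoir_def by simp

subsection \<open>Comparison with independent sampling\<close>

lemma pmf_indep_sample_ge:
  assumes fin: "finite E" and SE: "S \<subseteq> E" and p: "0 \<le> p" "p \<le> 1"
  shows "p ^ card S * (1 - p) ^ (card E - card S) \<le> pmf (indep_sample p E) S"
proof -
  let ?P = "Pi_pmf E False (\<lambda>_. bernoulli_pmf p)"
  have "pmf ?P (\<lambda>x. x \<in> S) = (\<Prod>x\<in>E. pmf (bernoulli_pmf p) (x \<in> S))"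
    using SE by (intro pmf_Pi' fin) auto
  also have "\<dots> = (\<Prod>x\<in>E - S. pmf (bernoulli_pmf p) (x \<in> S)) * (\<Prod>x\<in>S. pmf (bernoulli_pmf p) (x \<in> S))"
    by (rule prod.subset_diff[OF SE fin])
  also have "\<dots> = (\<Prod>x\<in>E - S. 1 - p) * (\<Prod>x\<in>S. p)"
    using p by (intro arg_cong2[where f="(*)"] prod.cong) auto
  also have "\<dots> = p ^ card S * (1 - p) ^ (card E - card S)"
    using SE fin by (simp add: card_Diff_subset finite_subset)
  finally have "p ^ card S * (1 - p) ^ (card E - card S) = measure_pmf.prob ?P {\<lambda>x. x \<in> S}"
    by (simp add: measure_pmf_single)
  also have "\<dots> \<le> measure_pmf.prob ?P ((\<lambda>g. {e \<in> E. g e}) -` {S})"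
    using SE by (intro measure_pmf.finite_measure_mono) auto
  also have "\<dots> = pmf (indep_sample p E) S"
    unfolding indep_sample_def by (simp add: pmf_map)
  finally show ?thesis .
qed

lemma uniform_subset_prob_le_indep_sample:
  assumes fin: "finite E" and p: "0 \<le> p" "p \<le> 1" and M: "M \<le> card E"
  shows "real (card E choose M) * (p ^ M * (1 - p) ^ (card E - M))
           * measure_pmf.prob (pmf_of_set (subsets_of_card E M)) A
         \<le> measure_pmf.prob (indep_sample p E) A"
proof -
  define U where "U = subsets_of_card E M"
  define q where "q = p ^ M * (1 - p) ^ (card E - M)"
  have finU: "finite U" and cU: "card U = card E choose M" and "U \<noteq> {}"
    using finite_subsets_of_card[OF fin] card_subsets_of_card[OF fin] subsets_of_card_nonempty[OF fin M]
    unfolding U_def by auto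
  hence "real (card E choose M) * q * measure_pmf.prob (pmf_of_set U) A = (\<Sum>S\<in>U \<inter> A. q)"
    using cU M by (simp add: measure_pmf_of_set)
  also have "\<dots> \<le> (\<Sum>S\<in>U \<inter> A. pmf (indep_sample p E) S)"
    using pmf_indep_sample_ge[OF fin _ p] unfolding U_def subsets_of_card_def q_def
    by (intro sum_mono) auto
  also have "\<dots> = measure_pmf.prob (indep_sample p E) (U \<inter> A)"
    using finU by (simp add: measure_measure_pmf_finite)
  also have "\<dots> \<le> measure_pmf.prob (indep_sample p E) A"
    by (intro measure_pmf.finite_measure_mono) auto
  finally show ?thesis
    unfolding U_def q_def .
qed

theorem lemma4p7:
  fixes M t :: nat and es :: "'v set list" and f :: "'v set set \<Rightarrow> bool"
  assumes "M \<ge> 6" and "t > M" and "length es = t" and "distinct es"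
    and "\<forall>e\<in>set es. card e = 2"
  shows "measure_pmf.prob (reservoir M es) {S. f S}
           \<le> exp 1 * sqrt (real M) * measure_pmf.prob (indep_sample (real M / real t) (set es)) {S. f S}"
proof -
  define p where "p = real M / real t"
  define c where "c = real (t choose M) * (p ^ M * (1 - p) ^ (t - M))"
  define P where "P = measure_pmf.prob (pmf_of_set (subsets_of_card (set es) M)) {S. f S}"
  have M: "1 \<le> M" and card_es: "card (set es) = t"
    using assms distinct_card by auto
  have "1 \<le> exp 1 * sqrt (real M) * c"
    using binomial_at_mean_ge[OF M assms(2)] unfolding c_def p_def by (simp add: mult_ac)
  hence "P \<le> exp 1 * sqrt (real M) * (c * P)"
    using mult_right_mono[of 1 "exp 1 * sqrt (real M) * c" P] by (simp add: P_def mult_ac)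
  also have "c * P \<le> measure_pmf.prob (indep_sample p (set es)) {S. f S}"
    using uniform_subset_prob_le_indep_sample[of "set es" p M "{S. f S}"] assms card_es
    unfolding c_def P_def p_def by simp
  finally show ?thesis
    using reservoir_uniform[OF assms(4) M] assms unfolding P_def p_def by simp
qed

end
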